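(* Let $\mathcal E$ and $\mathcal C$ be categories with finite sums and let $F:\mathcal E\to\mathcal C$ be a discrete fibration that preserves finite sums. Let $X$ be an object of $\mathcal E$ such that $FX$ is a sum of a finite family $A_i$ of objects of $\mathcal C$ (with injections $\iota_i:A_i\to FX$). Then $X$ is itself a sum of a family $X_i$ of objects of $\mathcal E$ with $FX_i=A_i$ (with injections $X_i\to X$ lying over the $\iota_i$).
   Context: A functor $F:\mathcal E\to\mathcal C$ is a discrete fibration if for every object $X$ of $\mathcal E$ and every arrow $a:A\to FX$ in $\mathcal C$ there is a unique arrow $x$ in $\mathcal E$ with codomain $X$ and $Fx=a$. *)

theory Defs
  imports Main
begin

text \<open>Categories, given explicitly by objects, arrows, domain, codomain,
identities and composition (Comp g f is g after f).\<close>

record ('o, 'a) category =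
  Obj  :: "'o set"
  Arr  :: "'a set"
  Dom  :: "'a \<Rightarrow> 'o"
  Cod  :: "'a \<Rightarrow> 'o"
  Id   :: "'o \<Rightarrow> 'a"
  Comp :: "'a \<Rightarrow> 'a \<Rightarrow> 'a"

definition hom :: "('o, 'a) category \<Rightarrow> 'o \<Rightarrow> 'o \<Rightarrow> 'a set" where
  "hom C A B = {f \<in> Arr C. Dom C f = A \<and> Cod C f = B}"

definition is_category :: "('o, 'a) category \<Rightarrow> bool" where
  "is_category C \<longleftrightarrow>
     (\<forall>f \<in> Arr C. Dom C f \<in> Obj C \<and> Cod C f \<in> Obj C) \<and>
     (\<forall>A \<in> Obj C. Id C A \<in> hom C A A) \<and>
     (\<forall>f \<in> Arr C. \<forall>g \<in> Arr C. Cod C f = Dom C g \<longrightarrow>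
         Comp C g f \<in> hom C (Dom C f) (Cod C g)) \<and>
     (\<forall>f \<in> Arr C. Comp C f (Id C (Dom C f)) = f \<and> Comp C (Id C (Cod C f)) f = f) \<and>
     (\<forall>f \<in> Arr C. \<forall>g \<in> Arr C. \<forall>h \<in> Arr C. Cod C f = Dom C g \<longrightarrow> Cod C g = Dom C h \<longrightarrow>
         Comp C h (Comp C g f) = Comp C (Comp C h g) f)"

definition is_functor ::
  "('o1, 'a1) category \<Rightarrow> ('o2, 'a2) category \<Rightarrow> ('o1 \<Rightarrow> 'o2) \<Rightarrow> ('a1 \<Rightarrow> 'a2) \<Rightarrow> bool" where
  "is_functor E C FO FA \<longleftrightarrow>
     is_category E \<and> is_category C \<and>
     (\<forall>X \<in> Obj E. FO X \<in> Obj C) \<and>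
     (\<forall>f \<in> Arr E. FA f \<in> hom C (FO (Dom E f)) (FO (Cod E f))) \<and>
     (\<forall>X \<in> Obj E. FA (Id E X) = Id C (FO X)) \<and>
     (\<forall>f \<in> Arr E. \<forall>g \<in> Arr E. Cod E f = Dom E g \<longrightarrow> FA (Comp E g f) = Comp C (FA g) (FA f))"

definition discrete_fibration ::
  "('o1, 'a1) category \<Rightarrow> ('o2, 'a2) category \<Rightarrow> ('o1 \<Rightarrow> 'o2) \<Rightarrow> ('a1 \<Rightarrow> 'a2) \<Rightarrow> bool" where
  "discrete_fibration E C FO FA \<longleftrightarrow>
     is_functor E C FO FA \<and>
     (\<forall>X \<in> Obj E. \<forall>a \<in> Arr C. Cod C a = FO X \<longrightarrow>
        (\<exists>!x. x \<in> Arr E \<and> Cod E x = X \<and> FA x = a))"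

definition is_sum ::
  "('o, 'a) category \<Rightarrow> 'i set \<Rightarrow> ('i \<Rightarrow> 'o) \<Rightarrow> 'o \<Rightarrow> ('i \<Rightarrow> 'a) \<Rightarrow> bool" where
  "is_sum C I A S \<iota> \<longleftrightarrow>
     S \<in> Obj C \<and>
     (\<forall>i \<in> I. A i \<in> Obj C \<and> \<iota> i \<in> hom C (A i) S) \<and>
     (\<forall>Y \<in> Obj C. \<forall>f. (\<forall>i \<in> I. f i \<in> hom C (A i) Y) \<longrightarrow>
        (\<exists>!u. u \<in> hom C S Y \<and> (\<forall>i \<in> I. Comp C u (\<iota> i) = f i)))"

definition has_finite_sums :: "('o, 'a) category \<Rightarrow> bool" where
  "has_finite_sums C \<longleftrightarrow>
     (\<forall>n A. (\<forall>i < n. A i \<in> Obj C) \<longrightarrow> (\<exists>S \<iota>. is_sum C {..<(n::nat)} A S \<iota>))"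

definition preserves_finite_sums ::
  "('o1, 'a1) category \<Rightarrow> ('o2, 'a2) category \<Rightarrow> ('o1 \<Rightarrow> 'o2) \<Rightarrow> ('a1 \<Rightarrow> 'a2) \<Rightarrow> bool" where
  "preserves_finite_sums E C FO FA \<longleftrightarrow>
     (\<forall>n X S \<xi>. is_sum E {..<(n::nat)} X S \<xi> \<longrightarrow>
        is_sum C {..<n} (\<lambda>i. FO (X i)) (FO S) (\<lambda>i. FA (\<xi> i)))"

end

theory Submission
  imports Defs
begin

text \<open>Lift the injections \<iota> i uniquely to arrows \<xi> i : X i \<rightarrow> X, form a sum S of the X i in E
and let u : S \<rightarrow> X be the comparison arrow. Since F preserves sums, F u is the comparison
between two sums of the family A, hence an isomorphism. A discrete fibration reflects
isomorphisms, so u is one, and transporting the sum structure of S along u makes X,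
with injections \<xi> i, a sum of the X i.\<close>

lemma cat_comp_in_hom:
  "is_category C \<Longrightarrow> f \<in> hom C A B \<Longrightarrow> g \<in> hom C B D \<Longrightarrow> Comp C g f \<in> hom C A D"
  unfolding is_category_def hom_def by auto

lemma cat_assoc:
  "is_category C \<Longrightarrow> f \<in> hom C A B \<Longrightarrow> g \<in> hom C B D \<Longrightarrow> h \<in> hom C D K \<Longrightarrow>
    Comp C h (Comp C g f) = Comp C (Comp C h g) f"
  unfolding is_category_def hom_def by auto

lemma cat_id_in_hom: "is_category C \<Longrightarrow> A \<in> Obj C \<Longrightarrow> Id C A \<in> hom C A A"
  unfolding is_category_def by auto

lemma cat_id_left: "is_category C \<Longrightarrow> f \<in> hom C A B \<Longrightarrow> Comp C (Id C B) f = f"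
  unfolding is_category_def hom_def by auto

lemma cat_id_right: "is_category C \<Longrightarrow> f \<in> hom C A B \<Longrightarrow> Comp C f (Id C A) = f"
  unfolding is_category_def hom_def by auto

lemma hom_objs: "is_category C \<Longrightarrow> f \<in> hom C A B \<Longrightarrow> A \<in> Obj C \<and> B \<in> Obj C"
  unfolding is_category_def hom_def by auto

lemma functor_hom: "is_functor E C FO FA \<Longrightarrow> f \<in> hom E A B \<Longrightarrow> FA f \<in> hom C (FO A) (FO B)"
  unfolding is_functor_def hom_def by auto

lemma functor_comp:
  "is_functor E C FO FA \<Longrightarrow> f \<in> hom E A B \<Longrightarrow> g \<in> hom E B D \<Longrightarrow>
    FA (Comp E g f) = Comp C (FA g) (FA f)"
  unfolding is_functor_def hom_def by auto

lemma functor_id: "is_functor E C FO FA \<Longrightarrow> A \<in> Obj E \<Longrightarrow> FA (Id E A) = Id C (FO A)"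
  unfolding is_functor_def by auto

definition is_iso :: "('o, 'a) category \<Rightarrow> 'o \<Rightarrow> 'o \<Rightarrow> 'a \<Rightarrow> bool" where
  "is_iso C A B f \<longleftrightarrow>
     f \<in> hom C A B \<and> (\<exists>g \<in> hom C B A. Comp C g f = Id C A \<and> Comp C f g = Id C B)"

lemma is_sumD:
  assumes "is_sum C I A S \<sigma>"
  shows "S \<in> Obj C" and "\<And>i. i \<in> I \<Longrightarrow> A i \<in> Obj C" and "\<And>i. i \<in> I \<Longrightarrow> \<sigma> i \<in> hom C (A i) S"
  using assms unfolding is_sum_def by blast+

lemma is_sum_ex1_factor:
  assumes "is_sum C I A S \<sigma>" and "Y \<in> Obj C" and "\<forall>i \<in> I. f i \<in> hom C (A i) Y"
  shows "\<exists>!u. u \<in> hom C S Y \<and> (\<forall>i \<in> I. Comp C u (\<sigma> i) = f i)"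
proof -
  have "\<forall>Y \<in> Obj C. \<forall>f. (\<forall>i \<in> I. f i \<in> hom C (A i) Y) \<longrightarrow>
      (\<exists>!u. u \<in> hom C S Y \<and> (\<forall>i \<in> I. Comp C u (\<sigma> i) = f i))"
    using assms(1) unfolding is_sum_def by (elim conjE)
  then show ?thesis using assms(2,3) by (simp only: Ball_def)
qed

lemma is_sum_factor:
  assumes "is_sum C I A S \<sigma>" and "Y \<in> Obj C" and "\<forall>i \<in> I. f i \<in> hom C (A i) Y"
  obtains u where "u \<in> hom C S Y" and "\<forall>i \<in> I. Comp C u (\<sigma> i) = f i"
  using is_sum_ex1_factor[OF assms] by blast

lemma is_sum_eqI:
  assumes C: "is_category C" and sum: "is_sum C I A S \<sigma>"
    and u: "u \<in> hom C S Y" and u': "u' \<in> hom C S Y"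
    and agree: "\<forall>i \<in> I. Comp C u (\<sigma> i) = Comp C u' (\<sigma> i)"
  shows "u = u'"
proof -
  have "Y \<in> Obj C" using hom_objs[OF C u] by blast
  moreover have "\<forall>i \<in> I. Comp C u (\<sigma> i) \<in> hom C (A i) Y"
    using is_sumD(3)[OF sum] cat_comp_in_hom[OF C _ u] by blast
  ultimately have "\<exists>!w. w \<in> hom C S Y \<and> (\<forall>i \<in> I. Comp C w (\<sigma> i) = Comp C u (\<sigma> i))"
    by (rule is_sum_ex1_factor[OF sum])
  then show ?thesis using u u' agree by (metis (no_types, lifting))
qed

lemma is_sum_cong:
  "is_sum C I A S \<sigma> \<Longrightarrow> (\<And>i. i \<in> I \<Longrightarrow> A i = B i) \<Longrightarrow> is_sum C I B S \<sigma>"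
  unfolding is_sum_def by (metis (no_types, lifting))

lemma is_sum_comparison_is_iso:
  assumes C: "is_category C" and S: "is_sum C I A S \<sigma>" and T: "is_sum C I A T \<tau>"
    and u: "u \<in> hom C S T" and u\<sigma>: "\<forall>i \<in> I. Comp C u (\<sigma> i) = \<tau> i"
  shows "is_iso C S T u"
proof -
  have "\<forall>i \<in> I. \<sigma> i \<in> hom C (A i) S" using is_sumD(3)[OF S] by blast
  then obtain v where v: "v \<in> hom C T S" and v\<tau>: "\<forall>i \<in> I. Comp C v (\<tau> i) = \<sigma> i"
    by (rule is_sum_factor[OF T is_sumD(1)[OF S]])
  have "Comp C v u = Id C S"
  proof (rule is_sum_eqI[OF C S cat_comp_in_hom[OF C u v] cat_id_in_hom[OF C is_sumD(1)[OF S]]],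
      intro ballI)
    fix i assume i: "i \<in> I"
    have "Comp C (Comp C v u) (\<sigma> i) = Comp C v (Comp C u (\<sigma> i))"
      using cat_assoc[OF C is_sumD(3)[OF S i] u v] by simp
    also have "\<dots> = Comp C (Id C S) (\<sigma> i)"
      using i u\<sigma> v\<tau> cat_id_left[OF C is_sumD(3)[OF S i]] by simp
    finally show "Comp C (Comp C v u) (\<sigma> i) = Comp C (Id C S) (\<sigma> i)" .
  qed
  moreover have "Comp C u v = Id C T"
  proof (rule is_sum_eqI[OF C T cat_comp_in_hom[OF C v u] cat_id_in_hom[OF C is_sumD(1)[OF T]]],
      intro ballI)
    fix i assume i: "i \<in> I"
    have "Comp C (Comp C u v) (\<tau> i) = Comp C u (Comp C v (\<tau> i))"
      using cat_assoc[OF C is_sumD(3)[OF T i] v u] by simp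
    also have "\<dots> = Comp C (Id C T) (\<tau> i)"
      using i u\<sigma> v\<tau> cat_id_left[OF C is_sumD(3)[OF T i]] by simp
    finally show "Comp C (Comp C u v) (\<tau> i) = Comp C (Id C T) (\<tau> i)" .
  qed
  ultimately show ?thesis unfolding is_iso_def using u v by blast
qed

lemma is_sum_transfer_iso:
  assumes C: "is_category C" and S: "is_sum C I A S \<sigma>" and iso: "is_iso C S T u"
    and u\<sigma>: "\<forall>i \<in> I. Comp C u (\<sigma> i) = \<tau> i"
  shows "is_sum C I A T \<tau>"
proof -
  obtain v where u: "u \<in> hom C S T" and v: "v \<in> hom C T S"
    and vu: "Comp C v u = Id C S" and uv: "Comp C u v = Id C T"
    using iso unfolding is_iso_def by blast
  have \<tau>: "\<tau> i \<in> hom C (A i) T" if "i \<in> I" for i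
    using cat_comp_in_hom[OF C is_sumD(3)[OF S that] u] u\<sigma> that by simp
  have \<tau>\<sigma>: "Comp C v (\<tau> i) = \<sigma> i" if "i \<in> I" for i
    using u\<sigma> that cat_assoc[OF C is_sumD(3)[OF S that] u v] vu cat_id_left[OF C is_sumD(3)[OF S that]]
    by simp
  have "\<exists>!t. t \<in> hom C T Y \<and> (\<forall>i \<in> I. Comp C t (\<tau> i) = f i)"
    if Y: "Y \<in> Obj C" and f: "\<forall>i \<in> I. f i \<in> hom C (A i) Y" for Y f
  proof -
    obtain w where w: "w \<in> hom C S Y" and w\<sigma>: "\<forall>i \<in> I. Comp C w (\<sigma> i) = f i"
      using is_sum_factor[OF S Y f] by blast
    show ?thesis
    proof (rule ex1I)
      show "Comp C w v \<in> hom C T Y \<and> (\<forall>i \<in> I. Comp C (Comp C w v) (\<tau> i) = f i)"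
        using cat_comp_in_hom[OF C v w] w\<sigma> \<tau>\<sigma> cat_assoc[OF C \<tau> v w] by simp
    next
      fix t assume t: "t \<in> hom C T Y \<and> (\<forall>i \<in> I. Comp C t (\<tau> i) = f i)"
      have "Comp C t u = w"
        using is_sum_eqI[OF C S cat_comp_in_hom[OF C u] w] t w\<sigma> u\<sigma> cat_assoc[OF C is_sumD(3)[OF S] u]
        by (metis (no_types, lifting))
      then show "t = Comp C w v"
        using cat_assoc[OF C v u, of t Y] uv cat_id_right[OF C, of t T Y] t by simp
    qed
  qed
  then show ?thesis
    unfolding is_sum_def using is_sumD(1,2)[OF S] hom_objs[OF C v] \<tau> by blast
qed

lemma discrete_fibration_functor: "discrete_fibration E C FO FA \<Longrightarrow> is_functor E C FO FA"
  unfolding discrete_fibration_def by blast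

lemma discrete_fibration_ex1_lift:
  assumes "discrete_fibration E C FO FA" and "X \<in> Obj E" and "a \<in> hom C A (FO X)"
  shows "\<exists>!x. x \<in> Arr E \<and> Cod E x = X \<and> FA x = a"
proof -
  have "\<forall>X \<in> Obj E. \<forall>a \<in> Arr C. Cod C a = FO X \<longrightarrow> (\<exists>!x. x \<in> Arr E \<and> Cod E x = X \<and> FA x = a)"
    using assms(1) unfolding discrete_fibration_def by (elim conjE)
  then show ?thesis using assms(2,3) unfolding hom_def by (simp only: Ball_def mem_Collect_eq)
qed

lemma discrete_fibration_lift:
  assumes DF: "discrete_fibration E C FO FA" and X: "X \<in> Obj E" and a: "a \<in> hom C A (FO X)"
  shows "\<exists>Y x. x \<in> hom E Y X \<and> FO Y = A \<and> FA x = a"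
proof -
  obtain x where x: "x \<in> Arr E" "Cod E x = X" "FA x = a"
    using discrete_fibration_ex1_lift[OF DF X a] by blast
  then have "x \<in> hom E (Dom E x) X" unfolding hom_def by blast
  moreover have "FO (Dom E x) = A"
    using functor_hom[OF discrete_fibration_functor[OF DF] calculation] x(3) a
    unfolding hom_def by simp
  ultimately show ?thesis using x(3) by blast
qed

lemma discrete_fibration_lift_unique:
  assumes DF: "discrete_fibration E C FO FA"
    and x: "x \<in> hom E A X" and y: "y \<in> hom E B X" and Fxy: "FA x = FA y"
  shows "x = y"
proof -
  have F: "is_functor E C FO FA" using discrete_fibration_functor[OF DF] .
  have "X \<in> Obj E" using hom_objs[OF _ x] F unfolding is_functor_def by blast
  then have "\<exists>!z. z \<in> Arr E \<and> Cod E z = X \<and> FA z = FA x"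
    using discrete_fibration_ex1_lift[OF DF _ functor_hom[OF F x]] by blast
  moreover have "x \<in> Arr E \<and> Cod E x = X \<and> FA x = FA x"
    and "y \<in> Arr E \<and> Cod E y = X \<and> FA y = FA x"
    using x y Fxy unfolding hom_def by auto
  ultimately show ?thesis by (metis the1_equality)
qed

lemma discrete_fibration_reflects_iso:
  assumes DF: "discrete_fibration E C FO FA"
    and u: "u \<in> hom E S X" and iso: "is_iso C (FO S) (FO X) (FA u)"
  shows "is_iso E S X u"
proof -
  have F: "is_functor E C FO FA" using discrete_fibration_functor[OF DF] .
  have E: "is_category E" and C: "is_category C" using F unfolding is_functor_def by blast+
  have S: "S \<in> Obj E" and X: "X \<in> Obj E" using hom_objs[OF E u] by blast+
  obtain v where v: "v \<in> hom C (FO X) (FO S)"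
    and vu: "Comp C v (FA u) = Id C (FO S)" and uv: "Comp C (FA u) v = Id C (FO X)"
    using iso unfolding is_iso_def by blast
  obtain Y w where w: "w \<in> hom E Y S" and "FO Y = FO X" and Fw: "FA w = v"
    using discrete_fibration_lift[OF DF S v] by blast
  \<comment> \<open>Both composites lie over identities, so they are the unique lifts of those identities.\<close>
  have uw: "Comp E u w = Id E X"
    using discrete_fibration_lift_unique[OF DF cat_comp_in_hom[OF E w u] cat_id_in_hom[OF E X]]
      functor_comp[OF F w u] functor_id[OF F X] Fw uv by simp
  then have "Y = X"
    using cat_comp_in_hom[OF E w u] cat_id_in_hom[OF E X] unfolding hom_def by auto
  with w have w: "w \<in> hom E X S" by simp
  have "Comp E w u = Id E S"
    using discrete_fibration_lift_unique[OF DF cat_comp_in_hom[OF E u w] cat_id_in_hom[OF E S]]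
      functor_comp[OF F u w] functor_id[OF F S] Fw vu by simp
  then show ?thesis unfolding is_iso_def using u w uw by blast
qed

theorem proposition2p4:
  fixes E :: "('o1, 'a1) category" and C :: "('o2, 'a2) category"
    and FO :: "'o1 \<Rightarrow> 'o2" and FA :: "'a1 \<Rightarrow> 'a2"
    and X :: 'o1 and n :: nat and A :: "nat \<Rightarrow> 'o2" and \<iota> :: "nat \<Rightarrow> 'a2"
  assumes "is_category E" and "is_category C"
    and "has_finite_sums E" and "has_finite_sums C"
    and "discrete_fibration E C FO FA"
    and "preserves_finite_sums E C FO FA"
    and "X \<in> Obj E"
    and "is_sum C {..<n} A (FO X) \<iota>"
  shows "\<exists>Xs \<xi>. is_sum E {..<n} Xs X \<xi> \<and>
           (\<forall>i < n. FO (Xs i) = A i \<and> FA (\<xi> i) = \<iota> i)"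
proof -
  note E = assms(1) and C = assms(2) and DF = assms(5) and X = assms(7) and sumX = assms(8)
  have F: "is_functor E C FO FA" using discrete_fibration_functor[OF DF] .
  have "\<forall>i < n. \<exists>Y x. x \<in> hom E Y X \<and> FO Y = A i \<and> FA x = \<iota> i"
    using discrete_fibration_lift[OF DF X is_sumD(3)[OF sumX]] by simp
  then obtain Xs \<xi> where \<xi>: "\<And>i. i < n \<Longrightarrow> \<xi> i \<in> hom E (Xs i) X"
    and FXs: "\<And>i. i < n \<Longrightarrow> FO (Xs i) = A i" and F\<xi>: "\<And>i. i < n \<Longrightarrow> FA (\<xi> i) = \<iota> i"
    by metis
  have "\<forall>i < n. Xs i \<in> Obj E" using hom_objs[OF E \<xi>] by blast
  then obtain S \<sigma> where sumS: "is_sum E {..<n} Xs S \<sigma>"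
    using assms(3) unfolding has_finite_sums_def by blast
  obtain u where u: "u \<in> hom E S X" and u\<sigma>: "\<forall>i \<in> {..<n}. Comp E u (\<sigma> i) = \<xi> i"
    using is_sum_factor[OF sumS X] \<xi> by blast
  have "is_sum C {..<n} (\<lambda>i. FO (Xs i)) (FO S) (\<lambda>i. FA (\<sigma> i))"
    using assms(6) sumS unfolding preserves_finite_sums_def by blast
  then have "is_sum C {..<n} A (FO S) (\<lambda>i. FA (\<sigma> i))"
    using is_sum_cong FXs by (metis lessThan_iff)
  moreover have "\<forall>i \<in> {..<n}. Comp C (FA u) (FA (\<sigma> i)) = \<iota> i"
    using functor_comp[OF F is_sumD(3)[OF sumS] u] u\<sigma> F\<xi> by simp
  ultimately have "is_iso C (FO S) (FO X) (FA u)"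
    using is_sum_comparison_is_iso[OF C _ sumX functor_hom[OF F u]] by blast
  then have "is_iso E S X u" using discrete_fibration_reflects_iso[OF DF u] by blast
  then have "is_sum E {..<n} Xs X \<xi>" using is_sum_transfer_iso[OF E sumS _ u\<sigma>] by blast
  then show ?thesis using FXs F\<xi> by blast
qed

end
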